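(* Let $\Gamma$ be a gain operator on $\ell^\infty_+(\mathcal I)$ satisfying Assumption A, and suppose that for some $\rho\in\mathcal K_\infty$: (i) the set $\Psi(\Gamma_\rho)$ is cofinal; (ii) $\Gamma_\rho$ satisfies the uniform NJI condition; (iii) there is $M>0$ with $|\mathcal I_i|\le M$ for all $i\in\mathcal I$. Then there exists $\rho'\in\mathcal K_\infty$ such that $\Sigma(\hat\Gamma_{\rho'})$ is UGS and $\Sigma(\Gamma_{\rho'})$ is UGAS, where $\hat\Gamma_{\rho'}(s):=s\oplus\Gamma_{\rho'}(s)$.
   Context: Let $\mathcal I$ be a nonempty countable index set; $\ell^\infty_+(\mathcal I)$ is the cone of nonnegative real families $s=(s_i)_{i\in\mathcal I}$ with $\|s\|:=\sup_i|s_i|<\infty$, ordered componentwise; $\oplus$ is the componentwise maximum. $\mathcal K$: continuous strictly increasing $\gamma:\mathbb R_+\to\mathbb R_+$ with $\gamma(0)=0$; $\mathcal K_\infty$: unbounded elements of $\mathcal K$, acting on $\ell^\infty_+(\mathcal I)$ componentwise; $\mathcal L$: continuous strictly decreasing functions $\mathbb R_+\to\mathbb R_+$ tending to $0$; $\mathcal{KL}$: continuous $\beta$ with $\beta(\cdot,t)\in\mathcal K$ and $\beta(r,\cdot)\in\mathcal L$ for $r>0$. For $\mathcal J\subset\mathcal I$, $s_{|\mathcal J}$ agrees with $s$ on $\mathcal J$ and is $0$ elsewhere. Gain operator: for each $i$ a finite (possibly empty) $\mathcal I_i\subset\mathcal I\setminus\{i\}$; directed graph $\mathcal G$ with vertices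 $\mathcal I$ and edges $ji$, $j\in\mathcal I_i$; a pointwise equicontinuous family $\gamma_{ij}\in\mathcal K_\infty$ ($ji\in E(\mathcal G)$); functions $\mu_i:\ell^\infty_+(\mathcal I)\to[0,\infty]$ with (M1) some $\xi\in\mathcal K_\infty$ has $\mu_i(0)=0$, $\mu_i(s)\ge\xi(\|s\|)$; (M2) $\mu_i$ monotone; (M3) for each finite $\mathcal J$, $\mu_i$ restricted to vectors vanishing off $\mathcal J$ is finite-valued and continuous; (M4) for each norm-bounded $A$ and $\varepsilon>0$ there is $\delta>0$ with $\sup_i|\mu_i(s_{|\mathcal I_i})-\mu_i(s^0_{|\mathcal I_i})|\le\varepsilon$ whenever $s^0\in A$, $\|s-s^0\|\le\delta$. $\Gamma_i(s):=\mu_i([\gamma_{ij}(s_j)]_{j\in\mathcal I_i})$ (argument zero outside $\mathcal I_i$). $\Gamma_\rho:=(\mathrm{id}+\rho)\circ\Gamma$. Assumption A: there is $\eta\in\mathcal K_\infty$ with $\gamma_{ij}\ge\eta$ for all $ji\in E(\mathcal G)$, and $\mathcal I_i\ne\emptyset$ for all $i$. $\mathcal N^-_i(n)$: vertices $j$ with a directed path from $j$ to $i$ of length at most $n$ ($\mathcal N^-_i(0)=\{i\}$). For monotone $T$ with $T(0)=0$: $\Psi(T):=\{s:T(s)\le s\}$; $\Sigma(T)$ is the system $s^{n+1}=T(s^n)$; UGS: $\|T^n(s)\|\le\varphi(\|s\|)$ for some $\varphi\in\mathcal K_\infty$ and all $s,n$; UGAS: $\|T^n(s)\|\le\beta(\|s\|,n)$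 for some $\beta\in\mathcal{KL}$. A set $A$ is cofinal if every $s$ has $\hat s\in A$ with $s\le\hat s$. $T$ satisfies the uniform NJI condition if for all $r,\varepsilon>0$ there are $n\in\mathbb N$, $\delta>0$ such that for all $s$, $i$ with $s_i\ge\varepsilon$, $\|s\|\le r$ there is $j\in\mathcal N^-_i(n)$ with $s_j\ge\delta$ and $T_j(s)<s_j$. *)

theory Defs
  imports "HOL-Analysis.Analysis" "HOL-Library.Countable"
begin

definition linfp :: "('i \<Rightarrow> real) set" where
  "linfp = {s. (\<forall>i. 0 \<le> s i) \<and> bdd_above (range (\<lambda>i. \<bar>s i\<bar>))}"

definition nrm :: "('i \<Rightarrow> real) \<Rightarrow> real" where
  "nrm s = (SUP i. \<bar>s i\<bar>)"

definition restr :: "'i set \<Rightarrow> ('i \<Rightarrow> real) \<Rightarrow> ('i \<Rightarrow> real)" where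
  "restr J s = (\<lambda>j. if j \<in> J then s j else 0)"

definition classK :: "(real \<Rightarrow> real) \<Rightarrow> bool" where
  "classK g \<longleftrightarrow> continuous_on {0..} g \<and> strict_mono_on {0..} g \<and> g 0 = 0"

definition classKinf :: "(real \<Rightarrow> real) \<Rightarrow> bool" where
  "classKinf g \<longleftrightarrow> classK g \<and> (\<forall>M. \<exists>t\<ge>0. g t > M)"

definition classL :: "(real \<Rightarrow> real) \<Rightarrow> bool" where
  "classL f \<longleftrightarrow> continuous_on {0..} f \<and> (\<forall>x\<ge>0. 0 \<le> f x)
     \<and> (\<forall>x y. 0 \<le> x \<longrightarrow> x < y \<longrightarrow> f y < f x) \<and> (f \<longlongrightarrow> 0) at_top"

definition classKL :: "(real \<Rightarrow> real \<Rightarrow> real) \<Rightarrow> bool" where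
  "classKL \<beta> \<longleftrightarrow> continuous_on ({0..} \<times> {0..}) (\<lambda>(r, t). \<beta> r t)
     \<and> (\<forall>t\<ge>0. classK (\<lambda>r. \<beta> r t)) \<and> (\<forall>r>0. classL (\<beta> r))"

text \<open>Gain operator data: Ii i = neighbours of i (edges j -> i for j in Ii i),
  gam i j = gamma_ij, mu i = mu_i (values in [0,\<infinity>]).\<close>
definition gain_operator ::
  "('i \<Rightarrow> 'i set) \<Rightarrow> ('i \<Rightarrow> 'i \<Rightarrow> real \<Rightarrow> real) \<Rightarrow> ('i \<Rightarrow> ('i \<Rightarrow> real) \<Rightarrow> ereal) \<Rightarrow> bool" where
  "gain_operator Ii gam mu \<longleftrightarrow>
     (\<forall>i. finite (Ii i) \<and> i \<notin> Ii i)
   \<and> (\<forall>i. \<forall>j\<in>Ii i. classKinf (gam i j))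
   \<comment> \<open>pointwise equicontinuity of the family\<close>
   \<and> (\<forall>r\<ge>0. \<forall>\<epsilon>>0. \<exists>\<delta>>0. \<forall>i. \<forall>j\<in>Ii i. \<forall>t\<ge>0.
         \<bar>t - r\<bar> < \<delta> \<longrightarrow> \<bar>gam i j t - gam i j r\<bar> < \<epsilon>)
   \<and> (\<forall>i. \<forall>s\<in>linfp. 0 \<le> mu i s)
   \<comment> \<open>(M1)\<close>
   \<and> (\<exists>\<xi>. classKinf \<xi> \<and> (\<forall>i. mu i (\<lambda>_. 0) = 0 \<and> (\<forall>s\<in>linfp. ereal (\<xi> (nrm s)) \<le> mu i s)))
   \<comment> \<open>(M2)\<close>
   \<and> (\<forall>i. \<forall>s\<in>linfp. \<forall>s'\<in>linfp. (\<forall>j. s j \<le> s' j) \<longrightarrow> mu i s \<le> mu i s')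
   \<comment> \<open>(M3)\<close>
   \<and> (\<forall>i. \<forall>J. finite J \<longrightarrow>
        (let V = {s\<in>linfp. \<forall>j. j \<notin> J \<longrightarrow> s j = 0} in
          (\<forall>s\<in>V. \<bar>mu i s\<bar> \<noteq> \<infinity>) \<and>
          (\<forall>s\<in>V. \<forall>\<epsilon>>0. \<exists>\<delta>>0. \<forall>t\<in>V. nrm (t - s) < \<delta> \<longrightarrow>
              \<bar>mu i t - mu i s\<bar> < ereal \<epsilon>)))
   \<comment> \<open>(M4)\<close>
   \<and> (\<forall>A\<subseteq>linfp. bdd_above (nrm ` A) \<longrightarrow> (\<forall>\<epsilon>>0. \<exists>\<delta>>0.
        \<forall>s0\<in>A. \<forall>s\<in>linfp. nrm (s - s0) \<le> \<delta> \<longrightarrow>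
          (\<forall>i. \<bar>mu i (restr (Ii i) s) - mu i (restr (Ii i) s0)\<bar> \<le> ereal \<epsilon>)))"

definition Gam ::
  "('i \<Rightarrow> 'i set) \<Rightarrow> ('i \<Rightarrow> 'i \<Rightarrow> real \<Rightarrow> real) \<Rightarrow> ('i \<Rightarrow> ('i \<Rightarrow> real) \<Rightarrow> ereal)
    \<Rightarrow> ('i \<Rightarrow> real) \<Rightarrow> ('i \<Rightarrow> real)" where
  "Gam Ii gam mu s = (\<lambda>i. real_of_ereal (mu i (\<lambda>j. if j \<in> Ii i then gam i j (s j) else 0)))"

definition Gam_rho ::
  "('i \<Rightarrow> 'i set) \<Rightarrow> ('i \<Rightarrow> 'i \<Rightarrow> real \<Rightarrow> real) \<Rightarrow> ('i \<Rightarrow> ('i \<Rightarrow> real) \<Rightarrow> ereal)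
    \<Rightarrow> (real \<Rightarrow> real) \<Rightarrow> ('i \<Rightarrow> real) \<Rightarrow> ('i \<Rightarrow> real)" where
  "Gam_rho Ii gam mu \<rho> s = (\<lambda>i. Gam Ii gam mu s i + \<rho> (Gam Ii gam mu s i))"

definition assumptionA ::
  "('i \<Rightarrow> 'i set) \<Rightarrow> ('i \<Rightarrow> 'i \<Rightarrow> real \<Rightarrow> real) \<Rightarrow> bool" where
  "assumptionA Ii gam \<longleftrightarrow>
     (\<exists>\<eta>. classKinf \<eta> \<and> (\<forall>i. \<forall>j\<in>Ii i. \<forall>t\<ge>0. \<eta> t \<le> gam i j t))
   \<and> (\<forall>i. Ii i \<noteq> {})"

definition Nin :: "('i \<Rightarrow> 'i set) \<Rightarrow> 'i \<Rightarrow> nat \<Rightarrow> 'i set" where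
  "Nin Ii i n = {j. \<exists>m\<le>n. \<exists>p::nat \<Rightarrow> 'i. p 0 = j \<and> p m = i \<and> (\<forall>k<m. p k \<in> Ii (p (Suc k)))}"

definition Psi :: "(('i \<Rightarrow> real) \<Rightarrow> ('i \<Rightarrow> real)) \<Rightarrow> ('i \<Rightarrow> real) set" where
  "Psi T = {s\<in>linfp. \<forall>i. T s i \<le> s i}"

definition cofinal :: "('i \<Rightarrow> real) set \<Rightarrow> bool" where
  "cofinal A \<longleftrightarrow> (\<forall>s\<in>linfp. \<exists>s'\<in>A. \<forall>i. s i \<le> s' i)"

definition uniform_NJI :: "('i \<Rightarrow> 'i set) \<Rightarrow> (('i \<Rightarrow> real) \<Rightarrow> ('i \<Rightarrow> real)) \<Rightarrow> bool" where
  "uniform_NJI Ii T \<longleftrightarrow> (\<forall>r>0. \<forall>\<epsilon>>0. \<exists>n::nat. \<exists>\<delta>>0. \<forall>s\<in>linfp. \<forall>i.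
      \<epsilon> \<le> s i \<and> nrm s \<le> r \<longrightarrow> (\<exists>j\<in>Nin Ii i n. \<delta> \<le> s j \<and> T s j < s j))"

definition UGS :: "(('i \<Rightarrow> real) \<Rightarrow> ('i \<Rightarrow> real)) \<Rightarrow> bool" where
  "UGS T \<longleftrightarrow> (\<exists>\<phi>. classKinf \<phi> \<and> (\<forall>s\<in>linfp. \<forall>n. nrm ((T ^^ n) s) \<le> \<phi> (nrm s)))"

definition UGAS :: "(('i \<Rightarrow> real) \<Rightarrow> ('i \<Rightarrow> real)) \<Rightarrow> bool" where
  "UGAS T \<longleftrightarrow> (\<exists>\<beta>. classKL \<beta> \<and> (\<forall>s\<in>linfp. \<forall>n. nrm ((T ^^ n) s) \<le> \<beta> (nrm s) (real n)))"

end

theory Submission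
  imports Defs
begin

(*
  Take rho' = rho/2, T = Gamma_rho and T' = Gamma_rho'.  Every order interval [0, u] with
  u in Psi(T) is invariant under T' and under its maximum with the identity, so by cofinality
  all orbits starting in a bounded set stay bounded.  A component of an orbit of s (+) T'(s)
  can only exceed its initial value where T' does not decrease it, whereas the NJI condition
  produces, near every large component, a component of size at least delta on which T, and hence
  T', strictly decreases; so small initial states have small orbits, which gives UGS.
  For T' itself the gap between rho and rho/2 turns each NJI witness into a decrease by a fixed
  amount c of some component in the n-step in-neighbourhood of i.  These neighbourhoods have at
  most (M + 1)^n elements, so a telescoping sum bounds the number of steps during which a
  component can stay above epsilon: the orbits are uniformly attractive, and UGS together with
  uniform attractivity yields a KL bound.
*)

section \<open>The cone and comparison functions\<close>

lemma linfpI: "(\<And>i. 0 \<le> s i \<and> s i \<le> b) \<Longrightarrow> s \<in> linfp"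
  unfolding linfp_def bdd_above_def by (auto intro!: exI[of _ b])

lemma linfp_nonneg: "s \<in> linfp \<Longrightarrow> 0 \<le> s i"
  by (simp add: linfp_def)

lemma linfp_le_nrm: "s \<in> linfp \<Longrightarrow> s i \<le> nrm s"
  unfolding nrm_def linfp_def by (auto intro: cSUP_upper2)

lemma nrm_nonneg: "s \<in> linfp \<Longrightarrow> 0 \<le> nrm s"
  by (rule order_trans[OF linfp_nonneg linfp_le_nrm])

lemma nrm_le: "(\<And>i. 0 \<le> s i \<and> s i \<le> b) \<Longrightarrow> nrm s \<le> b"
  unfolding nrm_def by (rule cSUP_least) auto

lemma nrm_mono:
  assumes "v \<in> linfp" "u \<in> linfp" "\<And>i. v i \<le> u i"
  shows "nrm v \<le> nrm u"
proof (rule nrm_le)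
  fix i
  show "0 \<le> v i \<and> v i \<le> nrm u"
    using linfp_nonneg[OF assms(1), of i] assms(3)[of i] linfp_le_nrm[OF assms(2), of i] by linarith
qed

lemma linfp_dominated:
  assumes "u \<in> linfp" "\<And>i. 0 \<le> v i \<and> v i \<le> u i"
  shows "v \<in> linfp"
proof (rule linfpI)
  fix i
  show "0 \<le> v i \<and> v i \<le> nrm u"
    using assms(2)[of i] linfp_le_nrm[OF assms(1), of i] by linarith
qed

lemma classK_nonneg: "classK g \<Longrightarrow> 0 \<le> x \<Longrightarrow> 0 \<le> g x"
  unfolding classK_def strict_mono_on_def by (metis atLeast_iff less_eq_real_def)

lemma classK_pos: "classK g \<Longrightarrow> 0 < x \<Longrightarrow> 0 < g x"
  unfolding classK_def strict_mono_on_def by (metis atLeast_iff less_eq_real_def)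

lemma classK_less: "classK g \<Longrightarrow> 0 \<le> x \<Longrightarrow> x < y \<Longrightarrow> g x < g y"
  unfolding classK_def strict_mono_on_def by auto

lemma classK_mono: "classK g \<Longrightarrow> 0 \<le> x \<Longrightarrow> x \<le> y \<Longrightarrow> g x \<le> g y"
  using classK_less by (metis order_le_less)

lemma classK_small:
  assumes "classK g" "0 < e"
  obtains d where "0 < d" "\<And>y. 0 \<le> y \<Longrightarrow> y \<le> d \<Longrightarrow> g y < e"
proof -
  have "continuous_on {0..} g" "g 0 = 0" "(0::real) \<in> {0..}"
    using assms(1) by (auto simp: classK_def)
  then obtain d where d: "0 < d" and close: "\<forall>y\<in>{0..}. dist y 0 < d \<longrightarrow> dist (g y) (g 0) < e"
    using assms(2) unfolding continuous_on_iff by blast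
  show thesis
  proof (rule that[of "d/2"])
    fix y :: real assume "0 \<le> y" "y \<le> d/2"
    then show "g y < e"
      using close[rule_format, of y] d \<open>g 0 = 0\<close> by (simp add: dist_real_def)
  qed (use d in simp)
qed

section \<open>Constructing comparison functions\<close>

definition ramp :: "real \<Rightarrow> real \<Rightarrow> real" where
  "ramp t r = min 1 (max 0 (2 * r / t - 1))"

lemma ramp_bounds: "0 \<le> ramp t r" "ramp t r \<le> 1"
  by (auto simp: ramp_def)

lemma ramp_eq_0: "0 < t \<Longrightarrow> 2 * r \<le> t \<Longrightarrow> ramp t r = 0"
  by (simp add: ramp_def field_simps)

lemma ramp_eq_1: "0 < t \<Longrightarrow> t \<le> r \<Longrightarrow> ramp t r = 1"
  by (simp add: ramp_def field_simps)

lemma ramp_mono: "0 < t \<Longrightarrow> r \<le> r' \<Longrightarrow> ramp t r \<le> ramp t r'"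
  unfolding ramp_def by (intro min.mono max.mono order_refl diff_right_mono divide_right_mono) auto

lemma ramp_lipschitz: "0 < t \<Longrightarrow> \<bar>ramp t r - ramp t r'\<bar> \<le> 2 * \<bar>r - r'\<bar> / t"
proof -
  assume t: "0 < t"
  have clip: "\<bar>min 1 (max 0 a) - min 1 (max 0 b)\<bar> \<le> \<bar>a - b\<bar>" for a b :: real
    by linarith
  have "(2 * r / t - 1) - (2 * r' / t - 1) = 2 * (r - r') / t"
    by (simp add: diff_divide_distrib)
  then have "\<bar>(2 * r / t - 1) - (2 * r' / t - 1)\<bar> = 2 * \<bar>r - r'\<bar> / t"
    by (simp only: abs_divide abs_mult abs_numeral abs_of_pos[OF t])
  with clip show ?thesis
    unfolding ramp_def by (rule ord_le_eq_trans)
qed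

lemma ramp_scaled_lipschitz:
  assumes "0 \<le> a" "0 < t" "0 < r1" "r \<in> {r1..r2}" "r' \<in> {r1..r2}"
    and "t < 2 * r2 \<Longrightarrow> a \<le> B" "0 \<le> B"
  shows "\<bar>a * ramp t r - a * ramp t r'\<bar> \<le> 2 * B / r1 * \<bar>r - r'\<bar>"
proof -
  consider "t \<le> r1" | "2 * r2 \<le> t" | "r1 < t" "t < 2 * r2" by linarith
  then show ?thesis
  proof cases
    case 1
    then show ?thesis using assms by (simp add: ramp_eq_1)
  next
    case 2
    then show ?thesis using assms by (simp add: ramp_eq_0)
  next
    case 3
    have "\<bar>a * ramp t r - a * ramp t r'\<bar> = a * \<bar>ramp t r - ramp t r'\<bar>"
      using assms(1) by (simp add: abs_mult flip: right_diff_distrib)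
    also have "\<dots> \<le> B * (2 * \<bar>r - r'\<bar> / t)"
      using 3 assms by (intro mult_mono ramp_lipschitz) auto
    also have "\<dots> \<le> B * (2 * \<bar>r - r'\<bar> / r1)"
      using 3 assms by (intro mult_left_mono divide_left_mono) auto
    also have "\<dots> = 2 * B / r1 * \<bar>r - r'\<bar>"
      by simp
    finally show ?thesis .
  qed
qed

context
  fixes F N :: "'a \<Rightarrow> real" and A :: "'a set"
  assumes F_nonneg: "\<And>x. x \<in> A \<Longrightarrow> 0 \<le> F x"
    and N_nonneg: "\<And>x. x \<in> A \<Longrightarrow> 0 \<le> N x"
    and bounded: "\<And>r. \<exists>B. \<forall>x\<in>A. N x \<le> r \<longrightarrow> F x \<le> B"
    and small: "\<And>\<epsilon>. 0 < \<epsilon> \<Longrightarrow> \<exists>\<delta>>0. \<forall>x\<in>A. N x \<le> \<delta> \<longrightarrow> F x \<le> \<epsilon>"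
begin

text \<open>Near any r > 0 the ramps with N x much larger than r vanish and those with N x much smaller
  than r are saturated, so only ramps with a uniformly bounded slope vary; this makes the
  supremum continuous, and it dominates F x at N x.\<close>

definition ramp_sup :: "real \<Rightarrow> real" where
  "ramp_sup r = Sup (insert 0 ((\<lambda>x. F x * ramp (N x) r) ` {x\<in>A. 0 < N x}))"

lemma ramp_term_le:
  assumes "x \<in> A" "0 < N x"
  shows "F x * ramp (N x) r \<le> (if N x < 2 * r then F x else 0)"
  using assms F_nonneg[OF assms(1)] ramp_bounds[of "N x" r]
  by (auto simp: ramp_eq_0 intro: mult_left_le)

lemma ramp_sup_bdd: "bdd_above (insert 0 ((\<lambda>x. F x * ramp (N x) r) ` {x\<in>A. 0 < N x}))"
proof -
  obtain B where B: "\<forall>x\<in>A. N x \<le> 2 * r \<longrightarrow> F x \<le> B" using bounded by blast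
  have "F x * ramp (N x) r \<le> max 0 B" if "x \<in> A" "0 < N x" for x
    using ramp_term_le[OF that, of r] B that by (auto split: if_splits)
  then show ?thesis by (auto simp: bdd_above_def intro!: exI[of _ "max 0 B"])
qed

lemma ramp_sup_upper: "x \<in> A \<Longrightarrow> 0 < N x \<Longrightarrow> F x * ramp (N x) r \<le> ramp_sup r"
  unfolding ramp_sup_def using ramp_sup_bdd by (intro cSup_upper) auto

lemma ramp_sup_nonneg: "0 \<le> ramp_sup r"
  unfolding ramp_sup_def using ramp_sup_bdd by (intro cSup_upper) auto

lemma ramp_sup_least:
  "0 \<le> M \<Longrightarrow> (\<And>x. x \<in> A \<Longrightarrow> 0 < N x \<Longrightarrow> F x * ramp (N x) r \<le> M) \<Longrightarrow> ramp_sup r \<le> M"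
  unfolding ramp_sup_def by (intro cSup_least) auto

lemma ramp_sup_le:
  assumes "0 \<le> M" "\<And>x. x \<in> A \<Longrightarrow> 0 < N x \<Longrightarrow> N x < 2 * r \<Longrightarrow> F x \<le> M"
  shows "ramp_sup r \<le> M"
proof (rule ramp_sup_least[OF assms(1)])
  fix x assume x: "x \<in> A" "0 < N x"
  show "F x * ramp (N x) r \<le> M"
    using ramp_term_le[OF x, of r] assms(1) assms(2)[OF x] by (auto split: if_splits)
qed

lemma ramp_sup_nonpos: "r \<le> 0 \<Longrightarrow> ramp_sup r = 0"
  using ramp_sup_le[of 0 r] ramp_sup_nonneg[of r] by fastforce

lemma ramp_sup_mono:
  assumes "r \<le> r'"
  shows "ramp_sup r \<le> ramp_sup r'"
proof (rule ramp_sup_least[OF ramp_sup_nonneg])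
  fix x assume x: "x \<in> A" "0 < N x"
  have "F x * ramp (N x) r \<le> F x * ramp (N x) r'"
    using F_nonneg[OF x(1)] ramp_mono[OF x(2) assms] by (rule mult_left_mono[rotated])
  also have "\<dots> \<le> ramp_sup r'"
    using ramp_sup_upper[OF x] .
  finally show "F x * ramp (N x) r \<le> ramp_sup r'" .
qed

lemma le_ramp_sup: "x \<in> A \<Longrightarrow> 0 < N x \<Longrightarrow> F x \<le> ramp_sup (N x)"
  using ramp_sup_upper[of x "N x"] by (simp add: ramp_eq_1)

lemma ramp_sup_isCont_0: "isCont ramp_sup 0"
  unfolding isCont_def LIM_eq
proof (intro allI impI)
  fix e :: real assume "0 < e"
  then obtain \<delta> where "0 < \<delta>" and \<delta>: "\<forall>x\<in>A. N x \<le> \<delta> \<longrightarrow> F x \<le> e / 2"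
    using small[of "e / 2"] by auto
  have bound: "ramp_sup r \<le> e / 2" if "\<bar>r\<bar> < \<delta> / 2" for r
    using \<delta> that \<open>0 < e\<close> by (intro ramp_sup_le) auto
  show "\<exists>s>0. \<forall>r. r \<noteq> 0 \<and> norm (r - 0) < s \<longrightarrow> norm (ramp_sup r - ramp_sup 0) < e"
  proof (intro exI[of _ "\<delta> / 2"] conjI allI impI)
    fix r :: real assume "r \<noteq> 0 \<and> norm (r - 0) < \<delta> / 2"
    then have "ramp_sup r \<le> e / 2" using bound by simp
    then show "norm (ramp_sup r - ramp_sup 0) < e"
      using ramp_sup_nonneg[of r] ramp_sup_nonpos[of 0] \<open>0 < e\<close> by simp
  qed (use \<open>0 < \<delta>\<close> in simp)
qed

lemma ramp_sup_lipschitz: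
  assumes "0 < r1"
  obtains C where "C-lipschitz_on {r1..r2} ramp_sup"
proof -
  obtain B where B: "\<forall>x\<in>A. N x \<le> 2 * r2 \<longrightarrow> F x \<le> B" using bounded by blast
  define C where "C = 2 * max 0 B / r1"
  have one_sided: "ramp_sup r \<le> ramp_sup r' + C * \<bar>r - r'\<bar>"
    if "r \<in> {r1..r2}" "r' \<in> {r1..r2}" for r r'
  proof (rule ramp_sup_least)
    show "0 \<le> ramp_sup r' + C * \<bar>r - r'\<bar>"
      using ramp_sup_nonneg assms by (simp add: C_def)
    fix x assume x: "x \<in> A" "0 < N x"
    have "F x * ramp (N x) r - F x * ramp (N x) r' \<le> C * \<bar>r - r'\<bar>"
      unfolding C_def using x that assms B F_nonneg
      by (intro order_trans[OF abs_ge_self ramp_scaled_lipschitz]) auto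
    then show "F x * ramp (N x) r \<le> ramp_sup r' + C * \<bar>r - r'\<bar>"
      using ramp_sup_upper[OF x, of r'] by linarith
  qed
  have "C-lipschitz_on {r1..r2} ramp_sup"
  proof (rule lipschitz_onI)
    fix r r' assume rr: "r \<in> {r1..r2}" "r' \<in> {r1..r2}"
    show "dist (ramp_sup r) (ramp_sup r') \<le> C * dist r r'"
      using one_sided[OF rr] one_sided[OF rr(2,1)]
      unfolding dist_real_def abs_le_iff abs_minus_commute[of r' r] by linarith
  qed (use assms in \<open>simp add: C_def\<close>)
  then show thesis ..
qed

lemma ramp_sup_continuous: "continuous_on {0..} ramp_sup"
proof (intro continuous_at_imp_continuous_on ballI)
  fix r :: real assume "r \<in> {0..}"
  show "isCont ramp_sup r"
  proof (cases "r = 0")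
    case True
    then show ?thesis using ramp_sup_isCont_0 by simp
  next
    case False
    with \<open>r \<in> {0..}\<close> have "0 < r" by simp
    then obtain C where "C-lipschitz_on {r/2..2*r} ramp_sup"
      using ramp_sup_lipschitz[of "r/2"] by auto
    then show ?thesis
      using \<open>0 < r\<close> by (intro continuous_on_interior[OF lipschitz_on_continuous_on]) auto
  qed
qed

lemma Kinf_majorant: "\<exists>\<phi>. classKinf \<phi> \<and> (\<forall>x\<in>A. F x \<le> \<phi> (N x))"
proof (intro exI conjI)
  let ?\<phi> = "\<lambda>r. r + ramp_sup r"
  have "continuous_on {0..} ?\<phi>"
    using ramp_sup_continuous by (intro continuous_on_add continuous_on_id)
  moreover have "strict_mono_on {0..} ?\<phi>"
    using ramp_sup_mono by (intro strict_mono_onI add_less_le_mono) auto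
  moreover have "\<exists>t\<ge>0. M < ?\<phi> t" for M
    using ramp_sup_nonneg[of "max 0 M + 1"] by (intro exI[of _ "max 0 M + 1"]) auto
  ultimately show "classKinf ?\<phi>"
    unfolding classKinf_def classK_def using ramp_sup_nonpos[of 0] by simp
  show "\<forall>x\<in>A. F x \<le> ?\<phi> (N x)"
  proof
    fix x assume x: "x \<in> A"
    show "F x \<le> ?\<phi> (N x)"
    proof (cases "N x = 0")
      case True
      have "F x \<le> e" if e: "0 < e" for e
      proof -
        obtain \<delta> where "0 < \<delta>" "\<forall>x\<in>A. N x \<le> \<delta> \<longrightarrow> F x \<le> e"
          using small[OF e] by blast
        then show ?thesis using x True by simp
      qed
      then have "F x \<le> 0" by (rule field_le_epsilon[where y = 0, simplified])
      then show ?thesis using True ramp_sup_nonneg[of 0] by simp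
    next
      case False
      then show ?thesis using le_ramp_sup[OF x] N_nonneg[OF x] by force
    qed
  qed
qed

end

lemma classL_pos:
  assumes "classL f" "0 \<le> t"
  shows "0 < f t"
proof -
  have "f (t + 1) < f t" "0 \<le> f (t + 1)"
    using assms unfolding classL_def by auto
  then show ?thesis by linarith
qed

lemma classL_classK_reciprocal:
  assumes \<phi>K: "classK \<phi>"
  shows "classL (\<lambda>t. \<phi> (1 / (t + 1)))"
  unfolding classL_def
proof (intro conjI allI impI)
  have \<phi>_cont: "continuous_on {0..} \<phi>" using \<phi>K by (simp add: classK_def)
  show "continuous_on {0..} (\<lambda>t. \<phi> (1 / (t + 1)))"
    by (rule continuous_on_compose2[OF \<phi>_cont], intro continuous_intros) auto
  have "filterlim (\<lambda>t::real. 1 + t) at_top at_top"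
    by (rule filterlim_tendsto_add_at_top[OF tendsto_const filterlim_ident])
  then have "((\<lambda>t::real. inverse (1 + t)) \<longlongrightarrow> 0) at_top"
    by (rule tendsto_inverse_0_at_top)
  then have "((\<lambda>t::real. 1 / (t + 1)) \<longlongrightarrow> 0) at_top"
    by (simp add: inverse_eq_divide add.commute)
  moreover have "\<forall>\<^sub>F t in at_top. 1 / (t + 1) \<in> {0::real..}"
    using eventually_ge_at_top[of 0] by eventually_elim simp
  ultimately have "((\<lambda>t. \<phi> (1 / (t + 1))) \<longlongrightarrow> \<phi> 0) at_top"
    by (intro continuous_on_tendsto_compose[OF \<phi>_cont]) auto
  then show "((\<lambda>t. \<phi> (1 / (t + 1))) \<longlongrightarrow> 0) at_top"
    using \<phi>K by (simp add: classK_def)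
next
  fix t :: real assume "0 \<le> t"
  then show "0 \<le> \<phi> (1 / (t + 1))" by (intro classK_nonneg[OF \<phi>K]) simp
next
  fix t u :: real assume "0 \<le> t" "t < u"
  then show "\<phi> (1 / (u + 1)) < \<phi> (1 / (t + 1))"
    by (intro classK_less[OF \<phi>K]) (auto simp: field_simps)
qed

lemma classL_majorant:
  fixes g :: "nat \<Rightarrow> real"
  assumes g_nonneg: "\<And>n. 0 \<le> g n" and g_lim: "g \<longlonglongrightarrow> 0"
  obtains l where "classL l" "\<And>n. g n \<le> l (real n)"
proof -
  have "\<exists>\<phi>. classKinf \<phi> \<and> (\<forall>n\<in>UNIV. g n \<le> \<phi> (1 / (real n + 1)))"
  proof (rule Kinf_majorant)
    fix r :: real
    obtain B where "\<forall>n. norm (g n) \<le> B"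
      using convergent_imp_Bseq[OF convergentI[OF g_lim]] by (auto simp: Bseq_def)
    then show "\<exists>B. \<forall>n\<in>UNIV. 1 / (real n + 1) \<le> r \<longrightarrow> g n \<le> B"
      by (auto dest: abs_le_D1)
  next
    fix \<epsilon> :: real assume "0 < \<epsilon>"
    then obtain K where K: "\<forall>n\<ge>K. norm (g n - 0) < \<epsilon>"
      using LIMSEQ_D[OF g_lim] by blast
    have "K \<le> n" if "1 / (real n + 1) \<le> 1 / (real K + 1)" for n
      using that by (simp add: field_simps)
    with K show "\<exists>\<delta>>0. \<forall>n\<in>UNIV. 1 / (real n + 1) \<le> \<delta> \<longrightarrow> g n \<le> \<epsilon>"
      by (intro exI[of _ "1 / (real K + 1)"]) force
  qed (use g_nonneg in auto)
  then obtain \<phi> where \<phi>: "classKinf \<phi>" "\<And>n. g n \<le> \<phi> (1 / (real n + 1))"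
    by auto
  have "classL (\<lambda>t. \<phi> (1 / (t + 1)))"
    using \<phi>(1) by (intro classL_classK_reciprocal) (simp add: classKinf_def)
  then show thesis using \<phi>(2) by (rule that)
qed

lemma le_sqrt_mult_one_plus:
  assumes "0 \<le> (x::real)"
  shows "x \<le> sqrt x * (1 + x)"
proof -
  have "sqrt x \<le> 1 + x"
    using assms by (intro real_le_lsqrt) (auto simp: power2_eq_square algebra_simps)
  then have "sqrt x * sqrt x \<le> sqrt x * (1 + x)"
    using assms by (intro mult_left_mono) auto
  then show ?thesis using assms by simp
qed

lemma le_eps_sqrt_mult_one_plus:
  assumes "0 < e" "0 \<le> (x::real)" "x < e\<^sup>2 \<or> 1 / e\<^sup>2 < x"
  shows "x \<le> e * (sqrt x * (1 + x))"
  using assms(3)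
proof
  assume "x < e\<^sup>2"
  then have "sqrt x \<le> e"
    using assms(1,2) by (simp add: real_sqrt_le_iff' less_imp_le)
  then have "sqrt x * sqrt x \<le> e * sqrt x"
    using assms(2) by (intro mult_right_mono) auto
  also have "\<dots> \<le> e * (sqrt x * (1 + x))"
    using assms(1,2) by (intro mult_left_mono) (auto simp: mult_le_cancel_left1)
  finally show ?thesis using assms(2) by simp
next
  assume "1 / e\<^sup>2 < x"
  then have "1 < e\<^sup>2 * x"
    using assms(1) by (simp add: field_simps)
  then have "1 \<le> e * sqrt x"
    using assms(1,2) real_sqrt_less_mono[of 1 "e\<^sup>2 * x"] by (simp add: real_sqrt_mult)
  then have "x \<le> (e * sqrt x) * x"
    using assms(2) by (simp add: mult_le_cancel_right1)
  also have "\<dots> \<le> e * (sqrt x * (1 + x))"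
    using assms(1,2) by (simp add: algebra_simps)
  finally show ?thesis .
qed

lemma classK_sqrt_mult_one_plus:
  assumes "classK \<phi>"
  shows "classK (\<lambda>r. sqrt (\<phi> r) * (1 + \<phi> r))"
  unfolding classK_def
proof (intro conjI strict_mono_onI)
  show "continuous_on {0..} (\<lambda>r. sqrt (\<phi> r) * (1 + \<phi> r))"
    using assms unfolding classK_def by (intro continuous_intros) auto
  show "sqrt (\<phi> 0) * (1 + \<phi> 0) = 0"
    using assms by (simp add: classK_def)
  fix r s :: real assume "r \<in> {0..}" "s \<in> {0..}" "r < s"
  then have "0 \<le> \<phi> r" "\<phi> r < \<phi> s"
    using classK_nonneg[OF assms] classK_less[OF assms] by auto
  then show "sqrt (\<phi> r) * (1 + \<phi> r) < sqrt (\<phi> s) * (1 + \<phi> s)"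
    by (intro mult_strict_mono) auto
qed

lemma classKL_mult:
  assumes \<psi>: "classK \<psi>" and l: "classL l"
  shows "classKL (\<lambda>r t. \<psi> r * l t)"
  unfolding classKL_def
proof (intro conjI allI impI)
  have "continuous_on {0..} \<psi>" "continuous_on {0..} l"
    using \<psi> l by (auto simp: classK_def classL_def)
  then have "continuous_on ({0..} \<times> {0..}) (\<lambda>x. \<psi> (fst x) * l (snd x))"
    by (intro continuous_on_mult continuous_on_compose2[where f = fst and g = \<psi>]
        continuous_on_compose2[where f = snd and g = l] continuous_on_fst continuous_on_snd
        continuous_on_id) auto
  then show "continuous_on ({0..} \<times> {0..}) (\<lambda>(r, t). \<psi> r * l t)"
    by (simp add: case_prod_beta')
next
  fix t :: real assume "0 \<le> t"
  then have "0 < l t" using classL_pos[OF l] by simp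
  then show "classK (\<lambda>r. \<psi> r * l t)"
    using \<psi> unfolding classK_def strict_mono_on_def
    by (auto intro: continuous_on_mult_right)
next
  fix r :: real assume "0 < r"
  then have "0 < \<psi> r" using classK_pos[OF \<psi>] by simp
  then show "classL (\<lambda>t. \<psi> r * l t)"
    using l unfolding classL_def
    by (auto intro: continuous_on_mult_left tendsto_mult_right_zero)
qed

text \<open>Dividing by sqrt phi * (1 + phi) instead of phi leaves a quotient at most
  min (sqrt phi) (1 / sqrt phi), small for both small and large arguments, so attractivity on
  bounded sets suffices to make the normalised decay uniform.\<close>

lemma uniform_decay_relative:
  assumes \<phi>: "classKinf \<phi>" and F_le: "\<And>a n. a \<in> A \<Longrightarrow> F a n \<le> \<phi> (N a)"
    and N_nonneg: "\<And>a. a \<in> A \<Longrightarrow> 0 \<le> N a"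
    and attractive: "\<And>r \<epsilon>. 0 < r \<Longrightarrow> 0 < \<epsilon> \<Longrightarrow> \<exists>K. \<forall>a\<in>A. \<forall>n\<ge>K. N a \<le> r \<longrightarrow> F a n \<le> \<epsilon>"
    and "0 < e"
  shows "\<exists>K. \<forall>a\<in>A. \<forall>n\<ge>K. F a n \<le> e * (sqrt (\<phi> (N a)) * (1 + \<phi> (N a)))"
proof -
  let ?\<psi> = "\<lambda>r. sqrt (\<phi> r) * (1 + \<phi> r)"
  have \<phi>K: "classK \<phi>" using \<phi> by (simp add: classKinf_def)
  obtain r0 where "0 < r0" and r0: "\<And>y. 0 \<le> y \<Longrightarrow> y \<le> r0 \<Longrightarrow> \<phi> y < e\<^sup>2"
    using classK_small[OF \<phi>K, of "e\<^sup>2"] \<open>0 < e\<close> by auto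
  obtain R where "0 \<le> R" and R: "1 / e\<^sup>2 < \<phi> R"
    using \<phi> unfolding classKinf_def by blast
  have "0 < R"
    using R \<open>0 \<le> R\<close> \<open>0 < e\<close> \<phi>K by (cases "R = 0") (auto simp: classK_def)
  moreover have "0 < e * ?\<psi> r0"
    using \<open>0 < e\<close> classK_pos[OF classK_sqrt_mult_one_plus[OF \<phi>K] \<open>0 < r0\<close>]
    by (rule mult_pos_pos)
  ultimately obtain K where K: "\<forall>a\<in>A. \<forall>n\<ge>K. N a \<le> R \<longrightarrow> F a n \<le> e * ?\<psi> r0"
    using attractive by meson
  have "F a n \<le> e * ?\<psi> (N a)" if a: "a \<in> A" and "K \<le> n" for a n
  proof (cases "N a \<le> r0 \<or> R \<le> N a")
    case True
    then have "\<phi> (N a) < e\<^sup>2 \<or> 1 / e\<^sup>2 < \<phi> (N a)"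
      using r0 R classK_mono[OF \<phi>K \<open>0 \<le> R\<close>] N_nonneg[OF a] by fastforce
    then have "\<phi> (N a) \<le> e * ?\<psi> (N a)"
      using \<open>0 < e\<close> classK_nonneg[OF \<phi>K N_nonneg[OF a]] by (intro le_eps_sqrt_mult_one_plus)
    with F_le[OF a, of n] show ?thesis by linarith
  next
    case False
    then have "F a n \<le> e * ?\<psi> r0"
      using K a \<open>K \<le> n\<close> by auto
    also have "\<dots> \<le> e * ?\<psi> (N a)"
      using False \<open>0 < r0\<close> \<open>0 < e\<close>
      by (intro mult_left_mono classK_mono[OF classK_sqrt_mult_one_plus[OF \<phi>K]]) auto
    finally show ?thesis .
  qed
  then show ?thesis by blast
qed

lemma normalised_decay:
  assumes \<psi>K: "classK \<psi>" and N_nonneg: "\<And>a. a \<in> A \<Longrightarrow> 0 \<le> N a"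
    and F_le: "\<And>a n. a \<in> A \<Longrightarrow> F a n \<le> \<psi> (N a)"
    and decay: "\<And>e. 0 < e \<Longrightarrow> \<exists>K. \<forall>a\<in>A. \<forall>n\<ge>K. F a n \<le> e * \<psi> (N a)"
  obtains g where "\<And>n. 0 \<le> g n" "g \<longlonglongrightarrow> 0" "\<And>a n. a \<in> A \<Longrightarrow> F a n \<le> \<psi> (N a) * g n"
proof -
  define S where "S n = insert 0 ((\<lambda>a. F a n / \<psi> (N a)) ` {a\<in>A. 0 < N a})" for n
  define g where "g n = Sup (S n)" for n
  have "F a n / \<psi> (N a) \<le> 1" if "a \<in> A" "0 < N a" for a n
    using F_le[OF that(1)] classK_pos[OF \<psi>K that(2)] by simp
  then have bdd: "bdd_above (S n)" for n
    unfolding S_def bdd_above_def by (auto intro!: exI[of _ 1])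
  have g_nonneg: "0 \<le> g n" for n
    unfolding g_def using bdd by (intro cSup_upper) (auto simp: S_def)
  have F_le_g: "F a n \<le> \<psi> (N a) * g n" if a: "a \<in> A" for a n
  proof (cases "N a = 0")
    case True
    then show ?thesis using F_le[OF a] \<psi>K by (simp add: classK_def)
  next
    case False
    then have "0 < N a" using N_nonneg[OF a] by simp
    then have "F a n / \<psi> (N a) \<le> g n"
      unfolding g_def using a bdd by (intro cSup_upper) (auto simp: S_def)
    then show ?thesis using classK_pos[OF \<psi>K \<open>0 < N a\<close>] by (simp add: field_simps)
  qed
  have "g \<longlonglongrightarrow> 0"
  proof (rule LIMSEQ_I)
    fix e :: real assume "0 < e"
    then obtain K where K: "\<forall>a\<in>A. \<forall>n\<ge>K. F a n \<le> e / 2 * \<psi> (N a)"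
      using decay[of "e / 2"] by auto
    have "g n \<le> e / 2" if "K \<le> n" for n
      unfolding g_def S_def
    proof (rule cSup_least)
      fix y assume "y \<in> insert 0 ((\<lambda>a. F a n / \<psi> (N a)) ` {a \<in> A. 0 < N a})"
      then show "y \<le> e / 2"
        using K that \<open>0 < e\<close> classK_pos[OF \<psi>K] by (auto simp: divide_le_eq)
    qed simp
    then show "\<exists>K. \<forall>n\<ge>K. norm (g n - 0) < e"
      using g_nonneg \<open>0 < e\<close> by (intro exI[of _ K]) force
  qed
  then show thesis using that g_nonneg F_le_g by blast
qed

lemma classKL_majorant:
  assumes N_nonneg: "\<And>a. a \<in> A \<Longrightarrow> 0 \<le> N a"
    and \<phi>: "classKinf \<phi>" and F_le: "\<And>a n. a \<in> A \<Longrightarrow> F a n \<le> \<phi> (N a)"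
    and attractive: "\<And>r \<epsilon>. 0 < r \<Longrightarrow> 0 < \<epsilon> \<Longrightarrow> \<exists>K. \<forall>a\<in>A. \<forall>n\<ge>K. N a \<le> r \<longrightarrow> F a n \<le> \<epsilon>"
  shows "\<exists>\<beta>. classKL \<beta> \<and> (\<forall>a\<in>A. \<forall>n. F a n \<le> \<beta> (N a) (real n))"
proof -
  define \<psi> where "\<psi> r = sqrt (\<phi> r) * (1 + \<phi> r)" for r
  have \<phi>K: "classK \<phi>" using \<phi> by (simp add: classKinf_def)
  have \<psi>K: "classK \<psi>" unfolding \<psi>_def using \<phi>K by (rule classK_sqrt_mult_one_plus)
  have F_le_\<psi>: "F a n \<le> \<psi> (N a)" if "a \<in> A" for a n
    unfolding \<psi>_def using F_le[OF that] le_sqrt_mult_one_plus classK_nonneg[OF \<phi>K N_nonneg[OF that]]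
    by (blast intro: order_trans)
  have decay: "\<exists>K. \<forall>a\<in>A. \<forall>n\<ge>K. F a n \<le> e * \<psi> (N a)" if "0 < e" for e
    using uniform_decay_relative[OF \<phi> F_le N_nonneg attractive that] by (simp add: \<psi>_def)
  obtain g where g: "\<And>n. 0 \<le> g n" "g \<longlonglongrightarrow> 0" "\<And>a n. a \<in> A \<Longrightarrow> F a n \<le> \<psi> (N a) * g n"
    using normalised_decay[of \<psi> A N F, OF \<psi>K N_nonneg F_le_\<psi> decay] by blast
  obtain l where l: "classL l" "\<And>n. g n \<le> l (real n)"
    using classL_majorant g(1,2) by blast
  have "F a n \<le> \<psi> (N a) * l (real n)" if "a \<in> A" for a n
    using g(3)[OF that, of n] l(2)[of n] classK_nonneg[OF \<psi>K N_nonneg[OF that]]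
    by (meson mult_left_mono order_trans)
  then show ?thesis
    using classKL_mult[OF \<psi>K l(1)] by blast
qed

section \<open>Gain operators and their interconnection graph\<close>

lemma gain_operatorD:
  assumes "gain_operator Ii gam mu"
  shows gain_operator_finite: "finite (Ii i)"
    and gain_operator_classK: "j \<in> Ii i \<Longrightarrow> classK (gam i j)"
    and gain_operator_nonneg: "s \<in> linfp \<Longrightarrow> 0 \<le> mu i s"
    and gain_operator_mono: "s \<in> linfp \<Longrightarrow> s' \<in> linfp \<Longrightarrow> (\<And>j. s j \<le> s' j) \<Longrightarrow> mu i s \<le> mu i s'"
    and gain_operator_finite_val:
      "s \<in> linfp \<Longrightarrow> (\<And>j. j \<notin> Ii i \<Longrightarrow> s j = 0) \<Longrightarrow> \<bar>mu i s\<bar> \<noteq> \<infinity>"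
proof -
  note go = assms[unfolded gain_operator_def]
  have fin: "\<forall>i. finite (Ii i) \<and> i \<notin> Ii i"
    using go by (elim conjE) assumption
  have K: "\<forall>i. \<forall>j\<in>Ii i. classKinf (gam i j)"
    using go by (elim conjE) assumption
  have nonneg: "\<forall>i. \<forall>s\<in>linfp. 0 \<le> mu i s"
    using go by (elim conjE) assumption
  have mono: "\<forall>i. \<forall>s\<in>linfp. \<forall>s'\<in>linfp. (\<forall>j. s j \<le> s' j) \<longrightarrow> mu i s \<le> mu i s'"
    using go by (elim conjE) assumption
  have M3: "\<forall>i. \<forall>J. finite J \<longrightarrow>
        (let V = {s\<in>linfp. \<forall>j. j \<notin> J \<longrightarrow> s j = 0} in
          (\<forall>s\<in>V. \<bar>mu i s\<bar> \<noteq> \<infinity>) \<and>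
          (\<forall>s\<in>V. \<forall>\<epsilon>>0. \<exists>\<delta>>0. \<forall>t\<in>V. nrm (t - s) < \<delta> \<longrightarrow>
              \<bar>mu i t - mu i s\<bar> < ereal \<epsilon>))"
    using go by (elim conjE) assumption
  show "finite (Ii i)" using fin by simp
  show "j \<in> Ii i \<Longrightarrow> classK (gam i j)" using K by (simp add: classKinf_def)
  show "s \<in> linfp \<Longrightarrow> 0 \<le> mu i s" using nonneg by simp
  show "mu i s \<le> mu i s'" if "s \<in> linfp" "s' \<in> linfp" "\<And>j. s j \<le> s' j"
    using that by (intro mono[rule_format]) auto
  show "\<bar>mu i s\<bar> \<noteq> \<infinity>" if "s \<in> linfp" "\<And>j. j \<notin> Ii i \<Longrightarrow> s j = 0"
  proof -
    have "\<forall>s\<in>{s\<in>linfp. \<forall>j. j \<notin> Ii i \<longrightarrow> s j = 0}. \<bar>mu i s\<bar> \<noteq> \<infinity>"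
      using M3[rule_format, of "Ii i" i] fin unfolding Let_def by simp
    then show ?thesis using that by simp
  qed
qed

definition gain_arg :: "('i \<Rightarrow> 'i set) \<Rightarrow> ('i \<Rightarrow> 'i \<Rightarrow> real \<Rightarrow> real) \<Rightarrow> 'i \<Rightarrow> ('i \<Rightarrow> real) \<Rightarrow> 'i \<Rightarrow> real"
  where "gain_arg Ii gam i s = (\<lambda>j. if j \<in> Ii i then gam i j (s j) else 0)"

lemma Gam_gain_arg: "Gam Ii gam mu s i = real_of_ereal (mu i (gain_arg Ii gam i s))"
  by (simp add: Gam_def gain_arg_def)

context
  fixes Ii gam mu
  assumes go: "gain_operator Ii gam mu"
begin

lemma gain_arg_mono:
  assumes "s \<in> linfp" "\<And>j. s j \<le> s' j"
  shows "0 \<le> gain_arg Ii gam i s j \<and> gain_arg Ii gam i s j \<le> gain_arg Ii gam i s' j"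
  using assms classK_nonneg[OF gain_operator_classK[OF go]] classK_mono[OF gain_operator_classK[OF go]]
  by (simp add: gain_arg_def linfp_nonneg)

lemma gain_arg_linfp:
  assumes "s \<in> linfp"
  shows "gain_arg Ii gam i s \<in> linfp"
proof (rule linfpI)
  fix j
  let ?B = "\<Sum>k\<in>Ii i. gain_arg Ii gam i s k"
  have nonneg: "0 \<le> gain_arg Ii gam i s k" for k
    using gain_arg_mono[OF assms order_refl] by blast
  have "gain_arg Ii gam i s j \<le> ?B"
  proof (cases "j \<in> Ii i")
    case True
    then show ?thesis using gain_operator_finite[OF go] nonneg by (intro member_le_sum) auto
  next
    case False
    then have "gain_arg Ii gam i s j = 0" by (simp add: gain_arg_def)
    then show ?thesis using nonneg by (simp add: sum_nonneg)
  qed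
  with nonneg show "0 \<le> gain_arg Ii gam i s j \<and> gain_arg Ii gam i s j \<le> ?B" by blast
qed

lemma Gam_nonneg: "s \<in> linfp \<Longrightarrow> 0 \<le> Gam Ii gam mu s i"
  unfolding Gam_gain_arg
  by (rule real_of_ereal_pos[OF gain_operator_nonneg[OF go gain_arg_linfp]])

lemma Gam_mono:
  assumes s: "s \<in> linfp" and s': "s' \<in> linfp" and le: "\<And>j. s j \<le> s' j"
  shows "Gam Ii gam mu s i \<le> Gam Ii gam mu s' i"
  unfolding Gam_gain_arg
proof (rule real_of_ereal_positive_mono)
  show "0 \<le> mu i (gain_arg Ii gam i s)"
    by (rule gain_operator_nonneg[OF go gain_arg_linfp[OF s]])
  show "mu i (gain_arg Ii gam i s) \<le> mu i (gain_arg Ii gam i s')"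
    using gain_arg_mono[OF s le] gain_arg_linfp[OF s] gain_arg_linfp[OF s']
    by (intro gain_operator_mono[OF go]) auto
  show "mu i (gain_arg Ii gam i s') \<noteq> \<infinity>"
    using gain_operator_finite_val[OF go gain_arg_linfp[OF s'], of i]
    by (force simp: gain_arg_def)
qed

lemma Gam_rho_nonneg: "classK \<rho> \<Longrightarrow> s \<in> linfp \<Longrightarrow> 0 \<le> Gam_rho Ii gam mu \<rho> s i"
  unfolding Gam_rho_def using Gam_nonneg classK_nonneg by (metis add_nonneg_nonneg)

lemma Gam_rho_mono:
  "classK \<rho> \<Longrightarrow> s \<in> linfp \<Longrightarrow> s' \<in> linfp \<Longrightarrow> (\<And>j. s j \<le> s' j)
    \<Longrightarrow> Gam_rho Ii gam mu \<rho> s i \<le> Gam_rho Ii gam mu \<rho> s' i"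
  unfolding Gam_rho_def using Gam_nonneg Gam_mono classK_mono by (metis add_mono)

end

lemma Nin_0: "Nin Ii i 0 = {i}"
  unfolding Nin_def by auto

lemma Nin_Suc_subset: "Nin Ii i (Suc n) \<subseteq> insert i (\<Union>l\<in>Ii i. Nin Ii l n)"
proof
  fix j assume "j \<in> Nin Ii i (Suc n)"
  then obtain m p where mp: "m \<le> Suc n" "p 0 = j" "p m = i" "\<forall>k<m. p k \<in> Ii (p (Suc k))"
    unfolding Nin_def by blast
  show "j \<in> insert i (\<Union>l\<in>Ii i. Nin Ii l n)"
  proof (cases m)
    case 0
    then show ?thesis using mp by simp
  next
    case (Suc m')
    then have "p m' \<in> Ii i" "j \<in> Nin Ii (p m') n"
      using mp unfolding Nin_def by (auto intro!: exI[of _ m'] exI[of _ p])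
    then show ?thesis by blast
  qed
qed

lemma card_Nin_le:
  assumes fin: "\<And>i. finite (Ii i)" and card: "\<And>i. real (card (Ii i)) \<le> M"
  shows "finite (Nin Ii i n) \<and> real (card (Nin Ii i n)) \<le> (M + 1) ^ n"
proof (induction n arbitrary: i)
  case 0
  then show ?case by (simp add: Nin_0)
next
  case (Suc n)
  let ?X = "\<Union>l\<in>Ii i. Nin Ii l n"
  have "0 \<le> M" using card[of i] of_nat_0_le_iff order_trans by blast
  have "finite ?X" using Suc fin by blast
  have "real (card ?X) \<le> (\<Sum>l\<in>Ii i. real (card (Nin Ii l n)))"
    using card_UN_le[OF fin[of i], of "\<lambda>l. Nin Ii l n"] by (simp flip: of_nat_sum)
  also have "\<dots> \<le> real (card (Ii i)) * (M + 1) ^ n"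
    using Suc by (intro sum_bounded_above) auto
  also have "\<dots> \<le> M * (M + 1) ^ n"
    using card \<open>0 \<le> M\<close> by (intro mult_right_mono) auto
  finally have "real (card (insert i ?X)) \<le> 1 + M * (M + 1) ^ n"
    using \<open>finite ?X\<close> by (simp add: card_insert_if)
  also have "\<dots> \<le> (M + 1) ^ Suc n"
    using \<open>0 \<le> M\<close> by (simp add: algebra_simps)
  finally show ?case
    using Nin_Suc_subset[of Ii i n] \<open>finite ?X\<close>
    by (meson card_mono finite.insertI finite_subset of_nat_le_iff order_trans)
qed

section \<open>Stability of a minorant of an NJI operator\<close>

lemma funpow_invariant: "P s \<Longrightarrow> (\<And>s. P s \<Longrightarrow> P (f s)) \<Longrightarrow> P ((f ^^ n) s)"
  by (induction n) auto

lemma Psi_linfp: "u \<in> Psi T \<Longrightarrow> u \<in> linfp"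
  by (simp add: Psi_def)

text \<open>T plays the role of Gamma_rho and T' that of Gamma_rho' for some rho' < rho; Tmax
  below is the paper's hat-Gamma_rho'.\<close>

locale NJI_minorant =
  fixes Ii :: "'i \<Rightarrow> 'i set" and T T' :: "('i \<Rightarrow> real) \<Rightarrow> 'i \<Rightarrow> real"
  assumes minorant_nonneg: "\<And>s i. s \<in> linfp \<Longrightarrow> 0 \<le> T' s i"
    and minorant_mono: "\<And>s s' i. s \<in> linfp \<Longrightarrow> s' \<in> linfp \<Longrightarrow> (\<And>j. s j \<le> s' j) \<Longrightarrow> T' s i \<le> T' s' i"
    and minorant_le: "\<And>s i. s \<in> linfp \<Longrightarrow> T' s i \<le> T s i"
    and cofinal_Psi: "cofinal (Psi T)"
    and NJI: "uniform_NJI Ii T"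
    and minorant_gap: "\<And>\<delta>. 0 < \<delta> \<Longrightarrow>
      \<exists>c>0. \<forall>v\<in>linfp. \<forall>j. \<delta> \<le> v j \<and> T v j < v j \<longrightarrow> T' v j \<le> v j - c"
    and bounded_Nin: "\<And>n. \<exists>C. \<forall>i. finite (Nin Ii i n) \<and> real (card (Nin Ii i n)) \<le> C"
begin

definition Tmax :: "('i \<Rightarrow> real) \<Rightarrow> 'i \<Rightarrow> real" where
  "Tmax s = (\<lambda>i. max (s i) (T' s i))"

lemma Tmax_apply: "Tmax s i = max (s i) (T' s i)"
  by (simp add: Tmax_def)

lemma exists_Psi_above: "s \<in> linfp \<Longrightarrow> \<exists>u\<in>Psi T. \<forall>i. s i \<le> u i"
  using cofinal_Psi by (simp add: cofinal_def)

lemma exists_Psi_above_const: "0 \<le> c \<Longrightarrow> \<exists>u\<in>Psi T. \<forall>i. c \<le> u i"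
  using exists_Psi_above[of "\<lambda>_. c"] linfpI[of "\<lambda>_. c" c] by simp

lemma minorant_below_Psi:
  assumes "s \<in> linfp" "u \<in> Psi T" "\<And>i. s i \<le> u i"
  shows "T' s i \<le> u i"
proof -
  have "T' s i \<le> T' u i" using assms Psi_linfp by (intro minorant_mono) auto
  also have "\<dots> \<le> T u i" using assms(2) Psi_linfp minorant_le by blast
  also have "\<dots> \<le> u i" using assms(2) by (simp add: Psi_def)
  finally show ?thesis .
qed

lemma Tmax_below_Psi:
  "s \<in> linfp \<Longrightarrow> u \<in> Psi T \<Longrightarrow> (\<And>i. s i \<le> u i) \<Longrightarrow> Tmax s i \<le> u i"
  using minorant_below_Psi by (simp add: Tmax_apply)

lemma minorant_linfp: "s \<in> linfp \<Longrightarrow> T' s \<in> linfp"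
  using exists_Psi_above minorant_nonneg minorant_below_Psi Psi_linfp
  by (metis linfp_dominated)

lemma Tmax_linfp: "s \<in> linfp \<Longrightarrow> Tmax s \<in> linfp"
  using exists_Psi_above Tmax_below_Psi Psi_linfp linfp_nonneg
  by (metis linfp_dominated Tmax_apply max.coboundedI1)

lemma iter_minorant_linfp: "s \<in> linfp \<Longrightarrow> (T' ^^ n) s \<in> linfp"
  by (induction n) (auto intro: minorant_linfp)

lemma iter_Tmax_linfp: "s \<in> linfp \<Longrightarrow> (Tmax ^^ n) s \<in> linfp"
  by (induction n) (auto intro: Tmax_linfp)

lemma iter_Tmax_below_Psi:
  assumes "s \<in> linfp" "u \<in> Psi T" "\<And>i. s i \<le> u i"
  shows "(Tmax ^^ n) s i \<le> u i"
  using funpow_invariant[where P = "\<lambda>v. v \<in> linfp \<and> (\<forall>i. v i \<le> u i)" and f = Tmax]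
    assms Tmax_linfp Tmax_below_Psi by blast

lemma iter_minorant_mono:
  assumes "s \<in> linfp" "s' \<in> linfp" "\<And>i. s i \<le> s' i"
  shows "(T' ^^ n) s i \<le> (T' ^^ n) s' i"
  using assms
proof (induction n arbitrary: i)
  case (Suc n)
  then show ?case using iter_minorant_linfp by (simp add: minorant_mono)
qed simp

lemma iter_Tmax_Suc: "(Tmax ^^ Suc n) s i = max ((Tmax ^^ n) s i) (T' ((Tmax ^^ n) s) i)"
  unfolding funpow.simps(2) o_apply by (rule Tmax_apply)

lemma iter_minorant_le_iter_Tmax:
  assumes "s \<in> linfp"
  shows "(T' ^^ n) s i \<le> (Tmax ^^ n) s i"
proof (induction n arbitrary: i)
  case (Suc n)
  have "T' ((T' ^^ n) s) i \<le> T' ((Tmax ^^ n) s) i"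
    using Suc assms iter_minorant_linfp iter_Tmax_linfp by (intro minorant_mono) auto
  then show ?case unfolding iter_Tmax_Suc by simp
qed simp

lemma iter_Tmax_le_max:
  assumes "s \<in> linfp"
  shows "(Tmax ^^ k) s j \<le> max (s j) (T' ((Tmax ^^ k) s) j)"
proof (induction k)
  case (Suc k)
  have "T' ((Tmax ^^ k) s) j \<le> T' ((Tmax ^^ Suc k) s) j"
    using assms iter_Tmax_linfp by (intro minorant_mono) (auto simp only: iter_Tmax_Suc)
  with Suc show ?case unfolding iter_Tmax_Suc[of k] by linarith
qed simp

lemma iter_Tmax_bounded: "\<exists>B. \<forall>s\<in>linfp. \<forall>n. nrm s \<le> r \<longrightarrow> nrm ((Tmax ^^ n) s) \<le> B"
proof -
  obtain u where u: "u \<in> Psi T" "\<And>i. max 0 r \<le> u i"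
    using exists_Psi_above_const[of "max 0 r"] by auto
  have "nrm ((Tmax ^^ n) s) \<le> nrm u" if "s \<in> linfp" "nrm s \<le> r" for s n
  proof -
    have "s i \<le> u i" for i
      using linfp_le_nrm[OF that(1), of i] that(2) u(2)[of i] by linarith
    then show ?thesis
      by (intro nrm_mono[OF iter_Tmax_linfp[OF that(1)] Psi_linfp[OF u(1)]]
          iter_Tmax_below_Psi[OF that(1) u(1)])
  qed
  then show ?thesis by blast
qed

text \<open>A large component of an orbit forces, by NJI, a component j with delta <= v j and
  T' v j < v j; by iter_Tmax_le_max such a component is bounded by its initial value, which is
  impossible for small initial states.\<close>

lemma iter_Tmax_small:
  assumes "0 < e"
  shows "\<exists>d>0. \<forall>s\<in>linfp. \<forall>n. nrm s \<le> d \<longrightarrow> nrm ((Tmax ^^ n) s) \<le> e"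
proof -
  obtain u where u: "u \<in> Psi T" "\<And>i. 1 \<le> u i"
    using exists_Psi_above_const[of 1] by auto
  have "1 \<le> nrm u"
    using order_trans[OF u(2) linfp_le_nrm[OF Psi_linfp[OF u(1)]]] .
  then have "0 < nrm u" by simp
  moreover have "0 < e / 2" using \<open>0 < e\<close> by simp
  ultimately obtain n \<delta> where "0 < \<delta>" and NJI_u: "\<forall>v\<in>linfp. \<forall>i. e / 2 \<le> v i \<and> nrm v \<le> nrm u \<longrightarrow>
      (\<exists>j\<in>Nin Ii i n. \<delta> \<le> v j \<and> T v j < v j)"
    using NJI unfolding uniform_NJI_def by blast
  define d where "d = min \<delta> 1 / 2"
  have "nrm ((Tmax ^^ k) s) \<le> e" if s: "s \<in> linfp" "nrm s \<le> d" for s k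
  proof -
    let ?v = "(Tmax ^^ k) s"
    have below_u: "s i \<le> u i" for i
      using linfp_le_nrm[OF s(1), of i] s(2) u(2)[of i] by (simp add: d_def)
    have "?v \<in> linfp" using iter_Tmax_linfp[OF s(1)] .
    have "nrm ?v \<le> nrm u"
      using below_u
      by (intro nrm_mono[OF \<open>?v \<in> linfp\<close> Psi_linfp[OF u(1)]] iter_Tmax_below_Psi[OF s(1) u(1)])
    have "?v i < e / 2" for i
    proof (rule ccontr)
      assume "\<not> ?v i < e / 2"
      then have "e / 2 \<le> ?v i" by simp
      then obtain j where j: "\<delta> \<le> ?v j" "T ?v j < ?v j"
        using NJI_u \<open>?v \<in> linfp\<close> \<open>nrm ?v \<le> nrm u\<close> by blast
      then have "T' ?v j < ?v j"
        using minorant_le[OF \<open>?v \<in> linfp\<close>, of j] by linarith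
      then have "?v j \<le> s j"
        using iter_Tmax_le_max[OF s(1), of k j] by linarith
      also have "\<dots> \<le> d"
        using linfp_le_nrm[OF s(1)] s(2) by (rule order_trans)
      finally show False
        using j(1) \<open>0 < \<delta>\<close> by (simp add: d_def)
    qed
    then have "nrm ?v \<le> e / 2"
      using \<open>?v \<in> linfp\<close> by (intro nrm_le) (auto simp: linfp_nonneg less_imp_le)
    then show ?thesis using \<open>0 < e\<close> by simp
  qed
  moreover have "0 < d" using \<open>0 < \<delta>\<close> by (simp add: d_def)
  ultimately show ?thesis by blast
qed

lemma UGS_Tmax: "UGS Tmax"
proof -
  have "\<exists>\<phi>. classKinf \<phi> \<and>
      (\<forall>x\<in>linfp \<times> UNIV. nrm ((Tmax ^^ snd x) (fst x)) \<le> \<phi> (nrm (fst x)))"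
    using iter_Tmax_bounded iter_Tmax_small
    by (intro Kinf_majorant) (auto simp: nrm_nonneg iter_Tmax_linfp)
  then show ?thesis unfolding UGS_def by auto
qed

lemma iter_minorant_below_Psi:
  assumes "s \<in> linfp" "u \<in> Psi T" "\<And>i. s i \<le> u i"
  shows "(T' ^^ n) s i \<le> u i"
  using funpow_invariant[where P = "\<lambda>v. v \<in> linfp \<and> (\<forall>i. v i \<le> u i)" and f = T']
    assms minorant_linfp minorant_below_Psi by blast

lemma iter_minorant_antitone:
  assumes "u \<in> Psi T" "m \<le> k"
  shows "(T' ^^ k) u i \<le> (T' ^^ m) u i"
proof -
  have u: "u \<in> linfp" using Psi_linfp[OF assms(1)] .
  have "(T' ^^ Suc k) u i \<le> (T' ^^ k) u i" for k i
  proof -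
    have "T' u j \<le> u j" for j
      using minorant_below_Psi[OF u assms(1)] by blast
    then have "(T' ^^ k) (T' u) i \<le> (T' ^^ k) u i"
      by (rule iter_minorant_mono[OF minorant_linfp[OF u] u])
    then show ?thesis by (simp only: funpow_Suc_right o_apply)
  qed
  then show ?thesis using lift_Suc_antimono_le[of "\<lambda>k. (T' ^^ k) u i"] assms(2) by blast
qed

text \<open>As long as component i of the orbit of u stays above epsilon, every step lowers some
  component in its n-neighbourhood by c; the total drop over the neighbourhood telescopes and is
  at most its size times nrm u.\<close>

lemma iter_minorant_visits_bounded:
  assumes u: "u \<in> Psi T"
    and NJI_u: "\<forall>v\<in>linfp. \<forall>i. \<epsilon> \<le> v i \<and> nrm v \<le> nrm u \<longrightarrow> (\<exists>j\<in>Nin Ii i n. \<delta> \<le> v j \<and> T v j < v j)"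
    and gap: "\<forall>v\<in>linfp. \<forall>j. \<delta> \<le> v j \<and> T v j < v j \<longrightarrow> T' v j \<le> v j - c"
    and fin: "finite (Nin Ii i n)" and card: "real (card (Nin Ii i n)) \<le> C"
    and visit: "\<epsilon> \<le> (T' ^^ k) u i"
  shows "real (Suc k) * c \<le> C * nrm u"
proof -
  let ?w = "\<lambda>m. (T' ^^ m) u" and ?N = "Nin Ii i n"
  have u_linfp: "u \<in> linfp" using Psi_linfp[OF u] .
  have w_linfp: "?w m \<in> linfp" for m using iter_minorant_linfp[OF u_linfp] .
  have w_le_u: "nrm (?w m) \<le> nrm u" for m
    using iter_minorant_below_Psi[OF u_linfp u] by (intro nrm_mono[OF w_linfp u_linfp]) auto
  have drop: "c \<le> (\<Sum>j\<in>?N. ?w m j - ?w (Suc m) j)" if "m < Suc k" for m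
  proof -
    have "\<epsilon> \<le> ?w m i" using visit iter_minorant_antitone[OF u, of m k i] that by simp
    then obtain j where j: "j \<in> ?N" "\<delta> \<le> ?w m j" "T (?w m) j < ?w m j"
      using NJI_u w_linfp w_le_u by blast
    then have "c \<le> ?w m j - ?w (Suc m) j"
      using gap w_linfp by fastforce
    also have "\<dots> \<le> (\<Sum>j\<in>?N. ?w m j - ?w (Suc m) j)"
      using fin j(1) iter_minorant_antitone[OF u, of m "Suc m"] by (intro member_le_sum) auto
    finally show ?thesis .
  qed
  have "real (Suc k) * c = (\<Sum>m<Suc k. c)" by simp
  also have "\<dots> \<le> (\<Sum>m<Suc k. \<Sum>j\<in>?N. ?w m j - ?w (Suc m) j)"
    using drop by (intro sum_mono) auto
  also have "\<dots> = (\<Sum>j\<in>?N. ?w 0 j - ?w (Suc k) j)"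
    by (subst sum.swap) (rule sum.cong[OF refl sum_lessThan_telescope'])
  also have "\<dots> \<le> (\<Sum>j\<in>?N. nrm u)"
  proof (rule sum_mono)
    fix j
    show "?w 0 j - ?w (Suc k) j \<le> nrm u"
      using linfp_le_nrm[OF u_linfp, of j] linfp_nonneg[OF w_linfp, of "Suc k" j]
      by (simp only: funpow_0)
  qed
  also have "\<dots> \<le> C * nrm u"
    using card nrm_nonneg[OF u_linfp] by (simp add: mult_right_mono)
  finally show ?thesis .
qed

lemma iter_minorant_attractive:
  assumes "0 < r" "0 < e"
  shows "\<exists>K. \<forall>s\<in>linfp. \<forall>k\<ge>K. nrm s \<le> r \<longrightarrow> nrm ((T' ^^ k) s) \<le> e"
proof -
  obtain u where u: "u \<in> Psi T" "\<And>i. r \<le> u i"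
    using exists_Psi_above_const[of r] assms(1) by auto
  have u_linfp: "u \<in> linfp" using Psi_linfp[OF u(1)] .
  have "r \<le> nrm u"
    using order_trans[OF u(2) linfp_le_nrm[OF u_linfp]] .
  then have "0 < nrm u" using assms(1) by simp
  with assms(2) obtain n \<delta> where "0 < \<delta>" and NJI_u: "\<forall>v\<in>linfp. \<forall>i. e \<le> v i \<and> nrm v \<le> nrm u \<longrightarrow>
      (\<exists>j\<in>Nin Ii i n. \<delta> \<le> v j \<and> T v j < v j)"
    using NJI unfolding uniform_NJI_def by blast
  obtain c where "0 < c" and gap: "\<forall>v\<in>linfp. \<forall>j. \<delta> \<le> v j \<and> T v j < v j \<longrightarrow> T' v j \<le> v j - c"
    using minorant_gap[OF \<open>0 < \<delta>\<close>] by blast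
  obtain C where C: "\<forall>i. finite (Nin Ii i n) \<and> real (card (Nin Ii i n)) \<le> C"
    using bounded_Nin by blast
  define K where "K = nat \<lceil>C * nrm u / c\<rceil>"
  have u_small: "(T' ^^ k) u i < e" if "K \<le> k" for k i
  proof (rule ccontr)
    assume "\<not> (T' ^^ k) u i < e"
    then have "real (Suc k) * c \<le> C * nrm u"
      using C by (intro iter_minorant_visits_bounded[OF u(1) NJI_u gap, of i]) auto
    moreover have "C * nrm u \<le> real k * c"
      using that \<open>0 < c\<close> unfolding K_def by (simp add: field_simps)
    ultimately show False using \<open>0 < c\<close> by (simp add: algebra_simps)
  qed
  have "nrm ((T' ^^ k) s) \<le> e" if s: "s \<in> linfp" "K \<le> k" "nrm s \<le> r" for s k
  proof (rule nrm_le)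
    fix i
    have "s j \<le> u j" for j
      using linfp_le_nrm[OF s(1), of j] s(3) u(2)[of j] by linarith
    then have "(T' ^^ k) s i \<le> (T' ^^ k) u i"
      by (rule iter_minorant_mono[OF s(1) u_linfp])
    then show "0 \<le> (T' ^^ k) s i \<and> (T' ^^ k) s i \<le> e"
      using u_small[OF s(2), of i] linfp_nonneg[OF iter_minorant_linfp[OF s(1)]] by fastforce
  qed
  then show ?thesis by blast
qed

lemma UGAS_minorant: "UGAS T'"
proof -
  obtain \<phi> where \<phi>: "classKinf \<phi>" "\<forall>s\<in>linfp. \<forall>n. nrm ((Tmax ^^ n) s) \<le> \<phi> (nrm s)"
    using UGS_Tmax unfolding UGS_def by blast
  have "nrm ((T' ^^ n) s) \<le> \<phi> (nrm s)" if "s \<in> linfp" for s n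
    using nrm_mono[OF iter_minorant_linfp iter_Tmax_linfp iter_minorant_le_iter_Tmax] \<phi>(2) that
    by (meson order_trans)
  then have "\<exists>\<beta>. classKL \<beta> \<and> (\<forall>s\<in>linfp. \<forall>n. nrm ((T' ^^ n) s) \<le> \<beta> (nrm s) (real n))"
    using iter_minorant_attractive
    by (intro classKL_majorant[OF _ \<phi>(1)]) (auto simp: nrm_nonneg)
  then show ?thesis unfolding UGAS_def .
qed

end

lemma classKinf_divide:
  assumes "classKinf \<rho>" "0 < c"
  shows "classKinf (\<lambda>x. \<rho> x / c)"
proof -
  have "continuous_on {0..} (\<lambda>x. \<rho> x / c)"
    using assms by (intro continuous_on_divide continuous_on_const) (auto simp: classKinf_def classK_def)
  moreover have "strict_mono_on {0..} (\<lambda>x. \<rho> x / c)"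
    using assms classK_less[of \<rho>] by (intro strict_mono_onI) (auto simp: classKinf_def divide_strict_right_mono)
  moreover have "\<exists>t\<ge>0. M < \<rho> t / c" for M
    using assms unfolding classKinf_def by (metis pos_less_divide_eq)
  ultimately show ?thesis
    using assms unfolding classKinf_def classK_def by simp
qed

lemma classK_half_gap:
  assumes "classK \<rho>" "0 < \<delta>"
  obtains c where "0 < c" "\<And>x g. \<delta> \<le> x \<Longrightarrow> 0 \<le> g \<Longrightarrow> g + \<rho> g < x \<Longrightarrow> g + \<rho> g / 2 \<le> x - c"
proof -
  obtain d where "0 < d" and d: "\<And>y. 0 \<le> y \<Longrightarrow> y \<le> d \<Longrightarrow> \<rho> y < \<delta> / 4"
    using classK_small[OF assms(1), of "\<delta> / 4"] assms(2) by auto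
  define g0 where "g0 = min d (\<delta> / 4)"
  have "0 < g0" "\<rho> g0 < \<delta> / 4"
    using \<open>0 < d\<close> assms(2) d[of g0] by (auto simp: g0_def)
  have "0 < \<rho> g0" using classK_pos[OF assms(1) \<open>0 < g0\<close>] .
  show thesis
  proof (rule that[of "min (\<rho> g0 / 2) (\<delta> / 2)"])
    show "0 < min (\<rho> g0 / 2) (\<delta> / 2)" using \<open>0 < \<rho> g0\<close> assms(2) by simp
    fix x g assume x: "\<delta> \<le> x" and "0 \<le> g" and g: "g + \<rho> g < x"
    show "g + \<rho> g / 2 \<le> x - min (\<rho> g0 / 2) (\<delta> / 2)"
    proof (cases "g0 \<le> g")
      case True
      then have "\<rho> g0 \<le> \<rho> g" using classK_mono[OF assms(1)] \<open>0 < g0\<close> by simp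
      then show ?thesis using g by linarith
    next
      case False
      then have "\<rho> g \<le> \<rho> g0" using classK_mono[OF assms(1) \<open>0 \<le> g\<close>] by simp
      moreover have "g0 \<le> \<delta> / 4" by (simp add: g0_def)
      ultimately show ?thesis
        using x False assms(2) \<open>\<rho> g0 < \<delta> / 4\<close> min.cobounded2[of "\<rho> g0 / 2" "\<delta> / 2"]
        by linarith
    qed
  qed
qed

lemma NJI_minorant_Gam_rho_half:
  assumes go: "gain_operator Ii gam mu" and \<rho>: "classK \<rho>"
    and "cofinal (Psi (Gam_rho Ii gam mu \<rho>))" "uniform_NJI Ii (Gam_rho Ii gam mu \<rho>)"
    and card: "\<And>i. real (card (Ii i)) \<le> M"
  shows "NJI_minorant Ii (Gam_rho Ii gam mu \<rho>) (Gam_rho Ii gam mu (\<lambda>x. \<rho> x / 2))"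
proof
  have \<rho>': "classK (\<lambda>x. \<rho> x / 2)"
    using \<rho> unfolding classK_def strict_mono_on_def
    by (auto intro: continuous_on_divide continuous_on_const)
  fix s s' :: "'a \<Rightarrow> real" and i
  show "s \<in> linfp \<Longrightarrow> 0 \<le> Gam_rho Ii gam mu (\<lambda>x. \<rho> x / 2) s i"
    by (rule Gam_rho_nonneg[OF go \<rho>'])
  show "s \<in> linfp \<Longrightarrow> s' \<in> linfp \<Longrightarrow> (\<And>j. s j \<le> s' j) \<Longrightarrow>
      Gam_rho Ii gam mu (\<lambda>x. \<rho> x / 2) s i \<le> Gam_rho Ii gam mu (\<lambda>x. \<rho> x / 2) s' i"
    by (rule Gam_rho_mono[OF go \<rho>'])
  show "s \<in> linfp \<Longrightarrow> Gam_rho Ii gam mu (\<lambda>x. \<rho> x / 2) s i \<le> Gam_rho Ii gam mu \<rho> s i"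
    using classK_nonneg[OF \<rho> Gam_nonneg[OF go]] by (simp add: Gam_rho_def)
next
  fix \<delta> :: real assume "0 < \<delta>"
  then obtain c where "0 < c"
    and c: "\<And>x g. \<delta> \<le> x \<Longrightarrow> 0 \<le> g \<Longrightarrow> g + \<rho> g < x \<Longrightarrow> g + \<rho> g / 2 \<le> x - c"
    using classK_half_gap[OF \<rho>] by blast
  have "Gam_rho Ii gam mu (\<lambda>x. \<rho> x / 2) v j \<le> v j - c"
    if "v \<in> linfp" "\<delta> \<le> v j" "Gam_rho Ii gam mu \<rho> v j < v j" for v j
    using that(3) unfolding Gam_rho_def by (rule c[OF that(2) Gam_nonneg[OF go that(1)]])
  with \<open>0 < c\<close> show "\<exists>c>0. \<forall>v\<in>linfp. \<forall>j. \<delta> \<le> v j \<and> Gam_rho Ii gam mu \<rho> v j < v j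
      \<longrightarrow> Gam_rho Ii gam mu (\<lambda>x. \<rho> x / 2) v j \<le> v j - c"
    by (intro exI[of _ c]) simp
next
  fix n
  show "\<exists>C. \<forall>i. finite (Nin Ii i n) \<and> real (card (Nin Ii i n)) \<le> C"
  proof
    show "\<forall>i. finite (Nin Ii i n) \<and> real (card (Nin Ii i n)) \<le> (M + 1) ^ n"
      using card_Nin_le[of Ii M, OF gain_operator_finite[OF go] card] by blast
  qed
qed (fact assms)+

theorem corollary2p21:
  fixes Ii :: "'i::countable \<Rightarrow> 'i set"
    and gam :: "'i \<Rightarrow> 'i \<Rightarrow> real \<Rightarrow> real"
    and mu :: "'i \<Rightarrow> ('i \<Rightarrow> real) \<Rightarrow> ereal"
    and \<rho> :: "real \<Rightarrow> real"
  assumes "gain_operator Ii gam mu"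
    and "assumptionA Ii gam"
    and "classKinf \<rho>"
    and "cofinal (Psi (Gam_rho Ii gam mu \<rho>))"
    and "uniform_NJI Ii (Gam_rho Ii gam mu \<rho>)"
    and "\<exists>M>0. \<forall>i. real (card (Ii i)) \<le> M"
  shows "\<exists>\<rho>'. classKinf \<rho>'
           \<and> UGS (\<lambda>s i. max (s i) (Gam_rho Ii gam mu \<rho>' s i))
           \<and> UGAS (Gam_rho Ii gam mu \<rho>')"
proof (intro exI conjI)
  obtain M where "\<forall>i. real (card (Ii i)) \<le> M" using assms(6) by blast
  then interpret NJI_minorant Ii "Gam_rho Ii gam mu \<rho>" "Gam_rho Ii gam mu (\<lambda>x. \<rho> x / 2)"
    using assms(1,3-5) by (intro NJI_minorant_Gam_rho_half) (auto simp: classKinf_def)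
  show "classKinf (\<lambda>x. \<rho> x / 2)"
    using assms(3) by (rule classKinf_divide) simp
  show "UGS (\<lambda>s i. max (s i) (Gam_rho Ii gam mu (\<lambda>x. \<rho> x / 2) s i))"
    using UGS_Tmax by (simp add: Tmax_def[abs_def])
  show "UGAS (Gam_rho Ii gam mu (\<lambda>x. \<rho> x / 2))"
    by (rule UGAS_minorant)
qed

end
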